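(* Let $0<\alpha<1/2$. For every real $2\times 2$ matrix $M$ we have $\sigma_2(D_1M)=\sigma_2(D_2M)$. Moreover $\sigma_2(D_1D_2D_2)=\sigma_2(D_2D_2D_2)>1$, and more generally $\sigma_2(D_1D_2^m)\ge\sigma_2(D_2^3)>1$ for every $m=2+3k$ with $k\ge 1$ an integer.
   Context: For $0<\alpha<1$ let $D_1=\begin{pmatrix}0&1\\ 2(1-\alpha)&2\alpha\end{pmatrix}$ and $D_2=\begin{pmatrix}0&1\\ -2(1-\alpha)&-2\alpha\end{pmatrix}$ (these are the derivative matrices of $(x,y)\mapsto(y,\tau(\alpha y+(1-\alpha)x))$, $\tau$ the symmetric tent map, on the regions $\alpha y+(1-\alpha)x<1/2$ and $>1/2$ respectively). For a real $2\times2$ matrix $B$, $\sigma_2(B)$ denotes its smaller singular value, i.e. the square root of the smaller eigenvalue of $B^TB$. *)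

theory Defs
  imports "HOL-Analysis.Analysis"
begin

definition mat2 :: "real \<Rightarrow> real \<Rightarrow> real \<Rightarrow> real \<Rightarrow> real^2^2" where
  "mat2 a b c d = (\<chi> i j. if i = 1 then (if j = 1 then a else b) else (if j = 1 then c else d))"

definition D1 :: "real \<Rightarrow> real^2^2" where
  "D1 \<alpha> = mat2 0 1 (2 * (1 - \<alpha>)) (2 * \<alpha>)"

definition D2 :: "real \<Rightarrow> real^2^2" where
  "D2 \<alpha> = mat2 0 1 (- 2 * (1 - \<alpha>)) (- 2 * \<alpha>)"

fun matpow :: "real^2^2 \<Rightarrow> nat \<Rightarrow> real^2^2" where
  "matpow M 0 = mat 1"
| "matpow M (Suc n) = M ** matpow M n"

definition sigma2 :: "real^2^2 \<Rightarrow> real" where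
  "sigma2 B = sqrt (Min {l. \<exists>v. v \<noteq> 0 \<and> (transpose B ** B) *v v = l *\<^sub>R v})"

end

theory Submission
  imports Defs
begin

text \<open>
  We have \<open>D2 = R D1\<close> with the reflection \<open>R = diag(1, -1)\<close>, so \<open>D1 M\<close> and \<open>D2 M\<close> have
  the same Gram matrix and hence the same smaller singular value. The smaller singular value
  of \<open>B\<close> is its least stretch \<open>min |B v| / |v|\<close>, so it is supermultiplicative; since
  \<open>D1 D2^(2+3k)\<close> has the same \<open>\<sigma>2\<close> as \<open>(D2^3)^(k+1)\<close>, everything reduces to \<open>\<sigma>2(D2^3) > 1\<close>.
  For a 2x2 matrix this follows from \<open>(det B)^2 > 1\<close> together with positivity at 1 of the
  characteristic polynomial \<open>1 - |B|_F^2 + (det B)^2\<close> of \<open>B^T B\<close>; for \<open>B = D2^3\<close> that value is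
  \<open>(1 - 2\<alpha>)^3\<close> times a positive polynomial in \<open>\<alpha>\<close>.
\<close>

lemma mat2_nth [simp]:
  "mat2 a b c d $1$1 = a" "mat2 a b c d $1$2 = b" "mat2 a b c d $2$1 = c" "mat2 a b c d $2$2 = d"
  by (simp_all add: mat2_def)

lemma matrix_matrix_mult_nth_2:
  fixes A B :: "real^2^2"
  shows "(A ** B)$1$1 = A$1$1 * B$1$1 + A$1$2 * B$2$1" "(A ** B)$1$2 = A$1$1 * B$1$2 + A$1$2 * B$2$2"
    "(A ** B)$2$1 = A$2$1 * B$1$1 + A$2$2 * B$2$1" "(A ** B)$2$2 = A$2$1 * B$1$2 + A$2$2 * B$2$2"
  by (simp_all add: matrix_matrix_mult_def sum_2)

lemma mat2_eq_iff:
  "(A::real^2^2) = B \<longleftrightarrow> A$1$1 = B$1$1 \<and> A$1$2 = B$1$2 \<and> A$2$1 = B$2$1 \<and> A$2$2 = B$2$2"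
  by (simp add: vec_eq_iff forall_2)

lemma has_eigenvalue_2_iff:
  fixes S :: "real^2^2"
  shows "(\<exists>v. v \<noteq> 0 \<and> S *v v = l *\<^sub>R v) \<longleftrightarrow> (S$1$1 - l) * (S$2$2 - l) = S$1$2 * S$2$1"
proof -
  have "S *v v = l *\<^sub>R v \<longleftrightarrow> (S - l *\<^sub>R mat 1) *v v = 0" for v
    by (simp add: matrix_vector_mult_diff_rdistrib scaleR_matrix_vector_assoc[symmetric])
  then have "(\<exists>v. v \<noteq> 0 \<and> S *v v = l *\<^sub>R v) \<longleftrightarrow> det (S - l *\<^sub>R mat 1) = 0"
    using det_eq_0_rank less_rank_noninjective vec.inj_iff_eq_0 by blast
  then show ?thesis
    by (simp add: det_2 mat_def algebra_simps)
qed

text \<open>Only the entry \<open>S$1$2\<close> off the diagonal is read: these are the eigenvalues of \<open>S\<close> when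
  \<open>S\<close> is symmetric.\<close>

definition eig_min :: "real^2^2 \<Rightarrow> real" where
  "eig_min S = (S$1$1 + S$2$2 - sqrt ((S$1$1 - S$2$2)^2 + 4 * (S$1$2)^2)) / 2"

definition eig_max :: "real^2^2 \<Rightarrow> real" where
  "eig_max S = (S$1$1 + S$2$2 + sqrt ((S$1$1 - S$2$2)^2 + 4 * (S$1$2)^2)) / 2"

lemma symmetric_2_iff: "transpose S = (S::real^2^2) \<longleftrightarrow> S$2$1 = S$1$2"
  by (auto simp: mat2_eq_iff transpose_def)

lemma eig_min_le_eig_max: "eig_min S \<le> eig_max S"
  by (simp add: eig_min_def eig_max_def)

lemma eig_min_add_eig_max: "eig_min S + eig_max S = trace S"
  by (simp add: eig_min_def eig_max_def trace_def sum_2 field_simps)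

lemma eig_min_mult_eig_max:
  assumes "transpose S = S"
  shows "eig_min S * eig_max S = det S"
proof -
  have "sqrt ((S$1$1 - S$2$2)^2 + 4 * (S$1$2)^2) ^ 2 = (S$1$1 - S$2$2)^2 + 4 * (S$1$2)^2"
    by simp
  then show ?thesis
    using assms by (simp add: eig_min_def eig_max_def det_2 symmetric_2_iff field_simps power2_eq_square)
qed

lemma symmetric_eigenvalues_2:
  assumes "transpose S = S"
  shows "{l. \<exists>v. v \<noteq> 0 \<and> S *v v = l *\<^sub>R v} = {eig_min S, eig_max S}"
proof -
  have "(S$1$1 - l) * (S$2$2 - l) - S$1$2 * S$2$1 = l^2 - trace S * l + det S" for l
    by (simp add: trace_def sum_2 det_2 algebra_simps power2_eq_square)
  also have "\<dots> l = (l - eig_min S) * (l - eig_max S)" for l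
    by (simp add: eig_min_add_eig_max[symmetric] eig_min_mult_eig_max[OF assms, symmetric]
        algebra_simps power2_eq_square)
  finally have "(S$1$1 - l) * (S$2$2 - l) = S$1$2 * S$2$1 \<longleftrightarrow> l = eig_min S \<or> l = eig_max S" for l
    by (metis eq_iff_diff_eq_0 mult_eq_0_iff)
  then show ?thesis
    by (auto simp: has_eigenvalue_2_iff)
qed

lemma psd_quadratic_form_nonneg:
  fixes p q r x y :: real
  assumes "0 \<le> p" "0 \<le> r" "p * r = q^2"
  shows "0 \<le> p * x^2 + 2 * q * x * y + r * y^2"
proof (cases "p = 0")
  case True
  then show ?thesis using assms by simp
next
  case False
  have "p * (p * x^2 + 2 * q * x * y + r * y^2) = (p * x + q * y)^2"
    using assms(3) by (simp add: algebra_simps power2_eq_square)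
  then show ?thesis
    using False assms(1) by (metis nle_le zero_le_mult_iff zero_le_power2)
qed

lemma eig_min_rayleigh:
  assumes "transpose S = S"
  shows "eig_min S * (v \<bullet> v) \<le> v \<bullet> (S *v v)"
proof -
  let ?s = "sqrt ((S$1$1 - S$2$2)^2 + 4 * (S$1$2)^2)"
  have "\<bar>S$1$1 - S$2$2\<bar> \<le> ?s"
    by (rule real_le_rsqrt) simp
  then have "0 \<le> S$1$1 - eig_min S" "0 \<le> S$2$2 - eig_min S"
    by (auto simp: eig_min_def)
  moreover have "(S$1$1 - eig_min S) * (S$2$2 - eig_min S) = (S$1$2)^2"
    using has_eigenvalue_2_iff[of S "eig_min S"] symmetric_eigenvalues_2[OF assms]
    by (auto simp: symmetric_2_iff[symmetric] assms power2_eq_square)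
  ultimately have "0 \<le> (S$1$1 - eig_min S) * (v$1)^2 + 2 * S$1$2 * v$1 * v$2 + (S$2$2 - eig_min S) * (v$2)^2"
    by (rule psd_quadratic_form_nonneg)
  then show ?thesis
    using assms by (simp add: inner_vec_def matrix_vector_mult_def sum_2 symmetric_2_iff
        algebra_simps power2_eq_square)
qed

lemma one_less_eig_min:
  assumes "transpose S = S" "0 \<le> eig_min S" "1 < det S" "trace S < 1 + det S"
  shows "1 < eig_min S"
proof (rule ccontr)
  assume "\<not> 1 < eig_min S"
  have "(1 - eig_min S) * (1 - eig_max S) = 1 - trace S + det S"
    by (simp add: eig_min_add_eig_max[symmetric] eig_min_mult_eig_max[OF assms(1), symmetric]
        algebra_simps)
  then have "eig_max S < 1"
    using \<open>\<not> 1 < eig_min S\<close> assms(4) by (smt (verit) mult_nonneg_nonpos)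
  then have "eig_min S * eig_max S \<le> 1"
    using \<open>\<not> 1 < eig_min S\<close> assms(2) eig_min_le_eig_max[of S] by (smt (verit) mult_le_one)
  then show False
    using assms(3) eig_min_mult_eig_max[OF assms(1)] by simp
qed

lemma transpose_gram: "transpose (transpose B ** B) = transpose B ** (B::real^'n^'m)"
  by (simp add: matrix_transpose_mul)

lemma inner_gram: "v \<bullet> ((transpose B ** B) *v v) = norm (B *v v)^2" for B :: "real^'n^'m"
proof -
  have "v \<bullet> (transpose B *v (B *v v)) = (B *v v) \<bullet> (B *v v)"
    by (metis dot_lmul_matrix vector_transpose_matrix)
  then show ?thesis
    unfolding matrix_vector_mul_assoc power2_norm_eq_inner .
qed

lemma sigma2_eq_sqrt_eig_min: "sigma2 B = sqrt (eig_min (transpose B ** B))"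
  unfolding sigma2_def symmetric_eigenvalues_2[OF transpose_gram]
  using eig_min_le_eig_max by (simp add: min_def)

lemma eig_min_gram_nonneg: "0 \<le> eig_min (transpose B ** (B::real^2^2))"
proof -
  obtain v where v: "v \<noteq> 0" "(transpose B ** B) *v v = eig_min (transpose B ** B) *\<^sub>R v"
    using symmetric_eigenvalues_2[OF transpose_gram, of B] by blast
  have "0 \<le> eig_min (transpose B ** B) * (v \<bullet> v)"
    using inner_gram[of v B] by (simp add: v(2))
  moreover have "0 < v \<bullet> v"
    using v(1) by simp
  ultimately show ?thesis
    by (simp add: zero_le_mult_iff)
qed

lemma sigma2_nonneg: "0 \<le> sigma2 B"
  by (simp add: sigma2_eq_sqrt_eig_min eig_min_gram_nonneg)

lemma sigma2_mult_norm_le: "sigma2 B * norm v \<le> norm (B *v v)"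
proof (rule power2_le_imp_le)
  have "(sigma2 B * norm v)^2 = eig_min (transpose B ** B) * (v \<bullet> v)"
    by (simp add: sigma2_eq_sqrt_eig_min eig_min_gram_nonneg power_mult_distrib power2_norm_eq_inner)
  also have "\<dots> \<le> norm (B *v v)^2"
    using eig_min_rayleigh[OF transpose_gram] by (simp add: inner_gram)
  finally show "(sigma2 B * norm v)^2 \<le> norm (B *v v)^2" .
qed simp

lemma sigma2_attained: "\<exists>v. v \<noteq> 0 \<and> norm (B *v v) = sigma2 B * norm v"
proof -
  obtain v where v: "v \<noteq> 0" "(transpose B ** B) *v v = eig_min (transpose B ** B) *\<^sub>R v"
    using symmetric_eigenvalues_2[OF transpose_gram, of B] by blast
  have "norm (B *v v)^2 = eig_min (transpose B ** B) * (v \<bullet> v)"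
    by (simp add: inner_gram[symmetric] v(2))
  also have "\<dots> = (sigma2 B * norm v)^2"
    by (simp add: sigma2_eq_sqrt_eig_min eig_min_gram_nonneg power_mult_distrib power2_norm_eq_inner)
  finally have "norm (B *v v) = sigma2 B * norm v"
    using sigma2_nonneg[of B] by (simp add: power2_eq_iff_nonneg)
  with v(1) show ?thesis
    by blast
qed

lemma sigma2_mult_ge: "sigma2 A * sigma2 B \<le> sigma2 (A ** B)"
proof -
  obtain v where v: "v \<noteq> 0" "norm ((A ** B) *v v) = sigma2 (A ** B) * norm v"
    using sigma2_attained by blast
  have "sigma2 A * sigma2 B * norm v \<le> sigma2 A * norm (B *v v)"
    by (simp add: mult.assoc mult_left_mono sigma2_mult_norm_le sigma2_nonneg)
  also have "\<dots> \<le> norm (A *v (B *v v))"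
    by (rule sigma2_mult_norm_le)
  also have "\<dots> = sigma2 (A ** B) * norm v"
    by (simp add: matrix_vector_mul_assoc v(2))
  finally show ?thesis
    using v(1) by simp
qed

lemma sigma2_orthogonal_mult:
  assumes "orthogonal_matrix Q"
  shows "sigma2 (Q ** M) = sigma2 M"
proof -
  have "transpose (Q ** M) ** (Q ** M) = transpose M ** M"
    using assms by (simp add: orthogonal_matrix matrix_transpose_mul matrix_mul_assoc
        matrix_mul_assoc[of "transpose M" "transpose Q", symmetric] matrix_mul_lid)
  then show ?thesis
    by (simp add: sigma2_def)
qed

lemma one_less_sigma2:
  assumes "1 < (det B)^2" "(B$1$1)^2 + (B$1$2)^2 + (B$2$1)^2 + (B$2$2)^2 < 1 + (det B)^2"
  shows "1 < sigma2 B"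
proof -
  have "1 < eig_min (transpose B ** B)"
  proof (rule one_less_eig_min[OF transpose_gram eig_min_gram_nonneg])
    have det: "det (transpose B ** B) = (det B)^2"
      by (simp add: det_mul power2_eq_square)
    then show "1 < det (transpose B ** B)"
      using assms(1) by simp
    have "trace (transpose B ** B) = (B$1$1)^2 + (B$1$2)^2 + (B$2$1)^2 + (B$2$2)^2"
      by (simp add: trace_def sum_2 matrix_matrix_mult_def transpose_def power2_eq_square)
    then show "trace (transpose B ** B) < 1 + det (transpose B ** B)"
      using assms(2) det by simp
  qed
  then show ?thesis
    by (simp add: sigma2_eq_sqrt_eig_min)
qed

lemma sigma2_matpow_ge:
  assumes "1 \<le> sigma2 A" "1 \<le> n"
  shows "sigma2 A \<le> sigma2 (matpow A n)"
  using assms(2)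
proof (induction n rule: dec_induct)
  case base
  then show ?case by (simp add: matrix_mul_rid)
next
  case (step n)
  have "sigma2 A \<le> sigma2 A * sigma2 (matpow A n)"
    using assms(1) step.IH by (simp add: mult_le_cancel_left1)
  also have "\<dots> \<le> sigma2 (matpow A (Suc n))"
    by (simp add: sigma2_mult_ge)
  finally show ?case .
qed

lemma matpow_add: "matpow M (m + n) = matpow M m ** matpow M n"
  by (induction m) (simp_all add: matrix_mul_lid matrix_mul_assoc)

lemma matpow_mult: "matpow M (m * n) = matpow (matpow M m) n"
  by (induction n) (simp_all add: matpow_add)

lemma D2_eq_reflection_mult_D1: "D2 a = mat2 1 0 0 (-1) ** D1 a"
  by (simp add: mat2_eq_iff matrix_matrix_mult_nth_2 D1_def D2_def)

lemma orthogonal_matrix_reflection: "orthogonal_matrix (mat2 1 0 0 (-1))"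
  by (simp add: orthogonal_matrix mat2_eq_iff matrix_matrix_mult_nth_2 transpose_def mat_def)

lemma sigma2_D1_mult_eq_D2_mult: "sigma2 (D1 a ** M) = sigma2 (D2 a ** M)"
  by (simp add: D2_eq_reflection_mult_D1 matrix_mul_assoc[symmetric] sigma2_orthogonal_mult
      orthogonal_matrix_reflection)

lemma one_less_sigma2_D2_cube:
  assumes "0 < a" "a < 1/2"
  shows "1 < sigma2 (D2 a ** D2 a ** D2 a)"
proof (rule one_less_sigma2)
  let ?A = "D2 a ** D2 a ** D2 a"
  have "det ?A = det (D2 a)^3"
    by (simp add: det_mul power3_eq_cube)
  then have det: "(det ?A)^2 = (2 - 2*a)^6"
    by (simp add: det_2 D2_def flip: power_mult)
  show "1 < (det ?A)^2"
    unfolding det using assms by (intro one_less_power) auto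
  have "1 + (2 - 2*a)^6 - ((?A$1$1)^2 + (?A$1$2)^2 + (?A$2$1)^2 + (?A$2$2)^2)
        = (1 - 2*a)^3 * (45 - 21*(2*a) + 17*(2*a)^2 + (2*a)^3)"
    by (simp add: matrix_matrix_mult_nth_2 D2_def power2_eq_square power3_eq_cube
        numeral_eq_Suc algebra_simps)
  moreover have "0 < (1 - 2*a)^3 * (45 - 21*(2*a) + 17*(2*a)^2 + (2*a)^3)"
    using assms by (intro mult_pos_pos) (simp_all add: add_pos_nonneg)
  ultimately show "(?A$1$1)^2 + (?A$1$2)^2 + (?A$2$1)^2 + (?A$2$2)^2 < 1 + (det ?A)^2"
    unfolding det by linarith
qed

theorem proposition6:
  fixes \<alpha> :: real
  assumes "0 < \<alpha>" and "\<alpha> < 1/2"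
  shows "(\<forall>M :: real^2^2. sigma2 (D1 \<alpha> ** M) = sigma2 (D2 \<alpha> ** M))
    \<and> sigma2 (D1 \<alpha> ** D2 \<alpha> ** D2 \<alpha>) = sigma2 (D2 \<alpha> ** D2 \<alpha> ** D2 \<alpha>)
    \<and> sigma2 (D2 \<alpha> ** D2 \<alpha> ** D2 \<alpha>) > 1
    \<and> (\<forall>k::nat. k \<ge> 1 \<longrightarrow>
         sigma2 (D1 \<alpha> ** matpow (D2 \<alpha>) (2 + 3 * k)) \<ge> sigma2 (matpow (D2 \<alpha>) 3)
         \<and> sigma2 (matpow (D2 \<alpha>) 3) > 1)"
proof -
  let ?D = "D2 \<alpha>"
  have cube: "matpow ?D 3 = ?D ** ?D ** ?D"
    by (simp add: numeral_eq_Suc matrix_mul_rid matrix_mul_assoc)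
  have gt1: "1 < sigma2 (matpow ?D 3)"
    using one_less_sigma2_D2_cube[OF assms] cube by simp
  have "sigma2 (matpow ?D 3) \<le> sigma2 (D1 \<alpha> ** matpow ?D (2 + 3 * k))" for k
  proof -
    have "Suc (2 + 3 * k) = 3 * Suc k"
      by simp
    then have "?D ** matpow ?D (2 + 3 * k) = matpow (matpow ?D 3) (Suc k)"
      by (metis matpow.simps(2) matpow_mult)
    then show ?thesis
      using sigma2_matpow_ge[of "matpow ?D 3" "Suc k"] gt1
      by (simp add: sigma2_D1_mult_eq_D2_mult)
  qed
  moreover have "sigma2 (D1 \<alpha> ** ?D ** ?D) = sigma2 (?D ** ?D ** ?D)"
    unfolding matrix_mul_assoc[symmetric] by (rule sigma2_D1_mult_eq_D2_mult)
  ultimately show ?thesis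
    using sigma2_D1_mult_eq_D2_mult gt1 cube by simp
qed

end
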